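(* For a bipartite quantum channel $\mathcal N_{AB\to A'B'}$, $$\gamma_{\mathrm{PPT}}(\mathcal N_{AB\to A'B'})\ge 2^{LN_{\max}(\mathcal N_{AB\to A'B'})}-1.$$
   Context: All Hilbert spaces finite-dimensional; $\log$ base 2. Alice holds $A$, $A'$; Bob holds $B$, $B'$. The unnormalized Choi operator of $\mathcal M_{AB\to A'B'}$ is $J^{\mathcal M}_{ABA'B'}=\sum_{i,j}|i\rangle\langle j|_{AB}\otimes\mathcal M(|i\rangle\langle j|_{AB})$. A bipartite channel is PPT if $(J^{\mathcal M}_{ABA'B'})^{T_{BB'}}\ge0$. $\gamma_{\mathrm{PPT}}(\mathcal N)=\inf\{c_1+c_2:\mathcal N=c_1\mathcal M_1-c_2\mathcal M_2,\ c_i\ge0,\ \mathcal M_i\text{ PPT channels}\}$. The max-logarithmic negativity is $LN_{\max}(\mathcal N)=\log\inf\{\max\{\|P_{AB}\|_\infty,\|P_{AB}^{T_B}\|_\infty\}:\ -P_{ABA'B'}^{T_{BB'}}\le(J^{\mathcal N}_{ABA'B'})^{T_{BB'}}\le P_{ABA'B'}^{T_{BB'}},\ P_{ABA'B'}\ge0\}$ with $P_{AB}=\mathrm{tr}_{A'B'}P_{ABA'B'}$. *)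

theory Defs
  imports Complex_Main "HOL-Library.Extended_Real"
begin

text \<open>Operators on a finite-dimensional Hilbert space with orthonormal basis indexed by
  the finite type 'i are represented by their matrices 'i \<Rightarrow> 'i \<Rightarrow> complex.
  Systems A, B, A', B' have basis types 'a, 'b, 'c, 'd; AB has basis 'a \<times> 'b,
  ABA'B' has basis ('a \<times> 'b) \<times> ('c \<times> 'd).\<close>

type_synonym 'i op = "'i \<Rightarrow> 'i \<Rightarrow> complex"

definition op_apply :: "'i::finite op \<Rightarrow> ('i \<Rightarrow> complex) \<Rightarrow> ('i \<Rightarrow> complex)" where
  "op_apply X v = (\<lambda>i. \<Sum>j\<in>UNIV. X i j * v j)"

definition vnorm :: "('i::finite \<Rightarrow> complex) \<Rightarrow> real" where
  "vnorm v = sqrt (\<Sum>i\<in>UNIV. (cmod (v i))\<^sup>2)"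

definition psd :: "'i::finite op \<Rightarrow> bool" where
  "psd X \<longleftrightarrow> (\<forall>v. (\<Sum>i\<in>UNIV. \<Sum>j\<in>UNIV. cnj (v i) * X i j * v j) \<in> \<real> \<and>
                     0 \<le> Re (\<Sum>i\<in>UNIV. \<Sum>j\<in>UNIV. cnj (v i) * X i j * v j))"

definition opnorm :: "'i::finite op \<Rightarrow> real" where
  "opnorm X = Sup {vnorm (op_apply X v) | v. vnorm v \<le> 1}"

definition op_trace :: "'i::finite op \<Rightarrow> complex" where
  "op_trace X = (\<Sum>i\<in>UNIV. X i i)"

definition unit_op :: "'i \<Rightarrow> 'i \<Rightarrow> 'i op" where
  "unit_op i j = (\<lambda>x y. if x = i \<and> y = j then 1 else 0)"

definition choi :: "(('a \<times> 'b) op \<Rightarrow> ('c \<times> 'd) op) \<Rightarrow> (('a \<times> 'b) \<times> ('c \<times> 'd)) op" where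
  "choi M = (\<lambda>(i, k) (j, l). M (unit_op i j) k l)"

definition ptBB :: "(('a \<times> 'b) \<times> ('c \<times> 'd)) op \<Rightarrow> (('a \<times> 'b) \<times> ('c \<times> 'd)) op" where
  "ptBB X = (\<lambda>((a, b), (c, d)) ((a', b'), (c', d')). X ((a, b'), (c, d')) ((a', b), (c', d)))"

definition ptB :: "('a \<times> 'b) op \<Rightarrow> ('a \<times> 'b) op" where
  "ptB X = (\<lambda>(a, b) (a', b'). X (a, b') (a', b))"

definition trA'B' :: "(('a \<times> 'b) \<times> ('c::finite \<times> 'd::finite)) op \<Rightarrow> ('a \<times> 'b) op" where
  "trA'B' P = (\<lambda>x y. \<Sum>k\<in>UNIV. P (x, k) (y, k))"

definition linear_map :: "('i op \<Rightarrow> 'j op) \<Rightarrow> bool" where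
  "linear_map M \<longleftrightarrow>
     (\<forall>X Y. M (\<lambda>i j. X i j + Y i j) = (\<lambda>k l. M X k l + M Y k l)) \<and>
     (\<forall>c X. M (\<lambda>i j. c * X i j) = (\<lambda>k l. c * M X k l))"

text \<open>Bipartite quantum channel AB \<rightarrow> A'B': linear, completely positive (Choi operator PSD,
  Choi's criterion) and trace preserving.\<close>
definition bichannel ::
  "(('a::finite \<times> 'b::finite) op \<Rightarrow> ('c::finite \<times> 'd::finite) op) \<Rightarrow> bool" where
  "bichannel M \<longleftrightarrow> linear_map M \<and> psd (choi M) \<and> (\<forall>X. op_trace (M X) = op_trace X)"

definition ppt_channel ::
  "(('a::finite \<times> 'b::finite) op \<Rightarrow> ('c::finite \<times> 'd::finite) op) \<Rightarrow> bool" where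
  "ppt_channel M \<longleftrightarrow> bichannel M \<and> psd (ptBB (choi M))"

definition gamma_PPT ::
  "(('a::finite \<times> 'b::finite) op \<Rightarrow> ('c::finite \<times> 'd::finite) op) \<Rightarrow> ereal" where
  "gamma_PPT N = Inf {ereal (c1 + c2) | c1 c2 M1 M2.
      c1 \<ge> 0 \<and> c2 \<ge> 0 \<and> ppt_channel M1 \<and> ppt_channel M2 \<and>
      N = (\<lambda>X k l. complex_of_real c1 * M1 X k l - complex_of_real c2 * M2 X k l)}"

definition LN_max ::
  "(('a::finite \<times> 'b::finite) op \<Rightarrow> ('c::finite \<times> 'd::finite) op) \<Rightarrow> real" where
  "LN_max N = log 2 (Inf {max (opnorm (trA'B' P)) (opnorm (ptB (trA'B' P))) | P.
      psd P \<and>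
      psd (\<lambda>x y. ptBB (choi N) x y + ptBB P x y) \<and>
      psd (\<lambda>x y. ptBB P x y - ptBB (choi N) x y)})"

end

theory Submission
  imports Defs "HOL-Analysis.L2_Norm"
begin

text \<open>Let \<open>N = c1 M1 - c2 M2\<close> with PPT channels \<open>M1, M2\<close> of Choi operators \<open>J1, J2\<close>.
  Then \<open>P = c1 J1 + c2 J2\<close> is feasible for \<open>LN_max N\<close>: the partial transposes of
  \<open>P + J\<^sup>N\<close> and \<open>P - J\<^sup>N\<close> are \<open>2 c1 J1\<^sup>T\<^sup>B\<^sup>B\<^sup>'\<close> and \<open>2 c2 J2\<^sup>T\<^sup>B\<^sup>B\<^sup>'\<close>, both positive.
  Trace preservation makes \<open>P\<^sub>A\<^sub>B = (c1 + c2) I\<close>, which is fixed by the partial transpose and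
  has norm at most \<open>c1 + c2\<close>. Hence even \<open>2 powr LN_max N \<le> c1 + c2\<close>, without the \<open>- 1\<close>.
  The infimum can only be recovered from its logarithm if it is positive: every feasible \<open>P\<close>
  dominates \<open>J\<^sup>N\<close> on the diagonal, so \<open>P\<^sub>A\<^sub>B\<close> has diagonal entries at least
  \<open>tr N(|x\<rangle>\<langle>x|) = 1\<close>.\<close>

lemma vnorm_eq_L2_set: "vnorm v = L2_set (\<lambda>i. cmod (v i)) UNIV"
  by (simp add: vnorm_def L2_set_def)

lemma norm_le_vnorm: "cmod (v i) \<le> vnorm (v :: 'i::finite \<Rightarrow> complex)"
  unfolding vnorm_eq_L2_set by (rule member_le_L2_set) auto

lemma vnorm_le_sum_norm: "vnorm (v :: 'i::finite \<Rightarrow> complex) \<le> (\<Sum>i\<in>UNIV. cmod (v i))"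
  unfolding vnorm_eq_L2_set by (rule L2_set_le_sum) auto

lemma vnorm_basis_vector: "vnorm (\<lambda>j::'i::finite. if j = i then 1 else 0) = 1"
  unfolding vnorm_def by (simp add: if_distrib[of "\<lambda>z. (cmod z)\<^sup>2"] cong: if_cong)

lemma bdd_above_opnorm_set: "bdd_above {vnorm (op_apply X v) | v. vnorm v \<le> 1}"
proof (rule bdd_aboveI)
  fix r assume "r \<in> {vnorm (op_apply X v) | v. vnorm v \<le> 1}"
  then obtain v where r: "r = vnorm (op_apply X v)" and v: "vnorm v \<le> 1" by auto
  have entry_bound: "cmod (op_apply X v i) \<le> (\<Sum>j\<in>UNIV. cmod (X i j))" for i
  proof -
    have "cmod (op_apply X v i) \<le> (\<Sum>j\<in>UNIV. cmod (X i j * v j))"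
      unfolding op_apply_def by (rule norm_sum)
    also have "\<dots> \<le> (\<Sum>j\<in>UNIV. cmod (X i j))"
      using order_trans[OF norm_le_vnorm v] by (intro sum_mono) (simp add: norm_mult mult_left_le)
    finally show ?thesis .
  qed
  have "r \<le> (\<Sum>i\<in>UNIV. cmod (op_apply X v i))" using r vnorm_le_sum_norm by simp
  also have "\<dots> \<le> (\<Sum>i\<in>UNIV. \<Sum>j\<in>UNIV. cmod (X i j))" by (intro sum_mono entry_bound)
  finally show "r \<le> (\<Sum>i\<in>UNIV. \<Sum>j\<in>UNIV. cmod (X i j))" .
qed

lemma norm_diag_le_opnorm: "cmod (X i i) \<le> opnorm (X :: 'i::finite op)"
proof -
  define e where "e = (\<lambda>j::'i. if j = i then (1::complex) else 0)"
  have "vnorm e = 1" unfolding e_def by (rule vnorm_basis_vector)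
  have "op_apply X e = (\<lambda>k. X k i)"
    by (simp add: op_apply_def e_def if_distrib[of "\<lambda>z. _ * z"] cong: if_cong)
  then have "cmod (X i i) \<le> vnorm (op_apply X e)" using norm_le_vnorm[of "\<lambda>k. X k i" i] by simp
  also have "\<dots> \<le> opnorm X" unfolding opnorm_def
    by (rule cSup_upper[OF _ bdd_above_opnorm_set]) (use \<open>vnorm e = 1\<close> in auto)
  finally show ?thesis .
qed

lemma opnorm_scalar_le: "opnorm (\<lambda>x y::'i::finite. if x = y then c else 0) \<le> cmod c"
  unfolding opnorm_def
proof (rule cSup_least)
  show "{vnorm (op_apply (\<lambda>x y::'i. if x = y then c else 0) v) | v. vnorm v \<le> 1} \<noteq> {}"
    by (rule ccontr) (auto simp: vnorm_def dest: spec[of _ "\<lambda>_. 0"])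
next
  fix r assume "r \<in> {vnorm (op_apply (\<lambda>x y::'i. if x = y then c else 0) v) | v. vnorm v \<le> 1}"
  then obtain v where r: "r = vnorm (op_apply (\<lambda>x y::'i. if x = y then c else 0) v)"
    and v: "vnorm v \<le> 1" by auto
  have "op_apply (\<lambda>x y::'i. if x = y then c else 0) v = (\<lambda>i. c * v i)"
    by (simp add: op_apply_def if_distrib[of "\<lambda>z. z * _"] cong: if_cong)
  moreover have "vnorm (\<lambda>i. c * v i) = cmod c * vnorm v"
    by (simp add: vnorm_def norm_mult power_mult_distrib sum_distrib_left[symmetric] real_sqrt_mult)
  ultimately show "r \<le> cmod c" using r v by (simp add: mult_left_le)
qed

lemma psd_add: "psd X \<Longrightarrow> psd Y \<Longrightarrow> psd (\<lambda>x y. X x y + Y x y)"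
  unfolding psd_def by (simp add: ring_distribs sum.distrib)

lemma psd_scale_nonneg:
  assumes "psd X" "r \<ge> 0" shows "psd (\<lambda>x y. complex_of_real r * X x y)"
proof -
  have "(\<Sum>i\<in>UNIV. \<Sum>j\<in>UNIV. cnj (v i) * (complex_of_real r * X i j) * v j)
      = complex_of_real r * (\<Sum>i\<in>UNIV. \<Sum>j\<in>UNIV. cnj (v i) * X i j * v j)" for v
    by (simp add: sum_distrib_left mult_ac)
  then show ?thesis using assms unfolding psd_def by simp
qed

lemma psd_diag_nonneg: assumes "psd X" shows "0 \<le> Re (X i (i::'i::finite))"
  using assms[unfolded psd_def, THEN spec, of "\<lambda>j. if j = i then 1 else 0"]
  by (simp add: if_distrib[of cnj] if_distrib[of "\<lambda>z. z * _"] if_distrib[of "\<lambda>z. _ * z"]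
      cong: if_cong)

lemma ptBB_diag: "ptBB X w w = X w w"
  unfolding ptBB_def by (auto split: prod.splits)

lemma ptBB_pointwise: "ptBB (\<lambda>x y. f (X x y) (Y x y)) = (\<lambda>x y. f (ptBB X x y) (ptBB Y x y))"
  unfolding ptBB_def by (auto simp: fun_eq_iff split: prod.splits)

lemma ptB_scalar: "ptB (\<lambda>x y. if x = y then c else 0) = (\<lambda>x y. if x = y then c else 0)"
  unfolding ptB_def by (auto simp: fun_eq_iff split: prod.splits)

lemma choi_pointwise:
  "choi (\<lambda>X k l. f (M1 X k l) (M2 X k l)) = (\<lambda>x y. f (choi M1 x y) (choi M2 x y))"
  unfolding choi_def by (auto simp: fun_eq_iff split: prod.splits)

lemma op_trace_unit_op: "op_trace (unit_op (x::'i::finite) y) = (if x = y then 1 else 0)"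
proof -
  have diagonal: "(\<lambda>i. unit_op x y i i) = (\<lambda>i. if i = x then (if x = y then 1 else 0) else 0)"
    by (auto simp: unit_op_def fun_eq_iff)
  show ?thesis unfolding op_trace_def diagonal by simp
qed

lemma trA'B'_choi:
  assumes "\<forall>X. op_trace (M X) = op_trace X"
  shows "trA'B' (choi M) = (\<lambda>x y. if x = y then 1 else 0)"
proof -
  have "trA'B' (choi M) x y = op_trace (M (unit_op x y))" for x y
    unfolding trA'B'_def choi_def op_trace_def by simp
  then show ?thesis using assms by (simp add: op_trace_unit_op fun_eq_iff)
qed

definition LN_max_feasible ::
  "(('a::finite \<times> 'b::finite) op \<Rightarrow> ('c::finite \<times> 'd::finite) op) \<Rightarrow>
   (('a \<times> 'b) \<times> ('c \<times> 'd)) op \<Rightarrow> bool" where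
  "LN_max_feasible N P \<longleftrightarrow> psd P \<and>
     psd (\<lambda>x y. ptBB (choi N) x y + ptBB P x y) \<and> psd (\<lambda>x y. ptBB P x y - ptBB (choi N) x y)"

definition LN_max_objective :: "(('a::finite \<times> 'b::finite) \<times> ('c::finite \<times> 'd::finite)) op \<Rightarrow> real" where
  "LN_max_objective P = max (opnorm (trA'B' P)) (opnorm (ptB (trA'B' P)))"

lemma LN_max_eq_log_Inf:
  "LN_max N = log 2 (Inf (LN_max_objective ` {P. LN_max_feasible N P}))"
  unfolding LN_max_def LN_max_feasible_def LN_max_objective_def image_Collect ..

lemma one_le_LN_max_objective:
  assumes "\<forall>X. op_trace (N X) = op_trace X" and "LN_max_feasible N P"
  shows "1 \<le> LN_max_objective P"
proof -
  fix x :: "'a \<times> 'b"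
  have "Re (choi N (x, k) (x, k)) \<le> Re (P (x, k) (x, k))" for k
    using assms(2) psd_diag_nonneg[of "\<lambda>x y. ptBB P x y - ptBB (choi N) x y" "(x, k)"]
    by (simp add: LN_max_feasible_def ptBB_diag)
  then have "Re (trA'B' (choi N) x x) \<le> Re (trA'B' P x x)"
    unfolding trA'B'_def Re_sum by (rule sum_mono)
  then have "1 \<le> Re (trA'B' P x x)" using trA'B'_choi[OF assms(1)] by simp
  also have "\<dots> \<le> opnorm (trA'B' P)"
    using complex_Re_le_cmod norm_diag_le_opnorm order_trans by blast
  finally show ?thesis unfolding LN_max_objective_def by simp
qed

lemma powr_LN_max_le_objective:
  assumes "\<forall>X. op_trace (N X) = op_trace X" and "LN_max_feasible N P"
  shows "2 powr LN_max N \<le> LN_max_objective P"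
proof -
  let ?S = "LN_max_objective ` {P. LN_max_feasible N P}"
  have lower: "\<And>s. s \<in> ?S \<Longrightarrow> 1 \<le> s" using one_le_LN_max_objective[OF assms(1)] by blast
  have "1 \<le> Inf ?S" using assms(2) by (intro cInf_greatest lower) auto
  moreover have "Inf ?S \<le> LN_max_objective P"
    using assms(2) lower by (intro cInf_lower bdd_belowI) auto
  ultimately show ?thesis unfolding LN_max_eq_log_Inf by simp
qed

lemma LN_max_feasible_of_ppt_decomposition:
  assumes "c1 \<ge> 0" "c2 \<ge> 0" "ppt_channel M1" "ppt_channel M2"
    and "N = (\<lambda>X k l. complex_of_real c1 * M1 X k l - complex_of_real c2 * M2 X k l)"
  defines "P \<equiv> \<lambda>x y. complex_of_real c1 * choi M1 x y + complex_of_real c2 * choi M2 x y"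
  shows "LN_max_feasible N P"
    and "trA'B' P = (\<lambda>x y. if x = y then complex_of_real (c1 + c2) else 0)"
proof -
  have J1: "psd (choi M1)" "psd (ptBB (choi M1))" "\<forall>X. op_trace (M1 X) = op_trace X"
    using assms(3) by (auto simp: ppt_channel_def bichannel_def)
  have J2: "psd (choi M2)" "psd (ptBB (choi M2))" "\<forall>X. op_trace (M2 X) = op_trace X"
    using assms(4) by (auto simp: ppt_channel_def bichannel_def)
  have choi_N: "choi N = (\<lambda>x y. complex_of_real c1 * choi M1 x y - complex_of_real c2 * choi M2 x y)"
    unfolding assms(5) by (rule choi_pointwise)
  have "ptBB P = (\<lambda>x y. complex_of_real c1 * ptBB (choi M1) x y + complex_of_real c2 * ptBB (choi M2) x y)"
    unfolding P_def by (rule ptBB_pointwise)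
  moreover have "ptBB (choi N)
      = (\<lambda>x y. complex_of_real c1 * ptBB (choi M1) x y - complex_of_real c2 * ptBB (choi M2) x y)"
    unfolding choi_N by (rule ptBB_pointwise)
  ultimately have sum_eq: "(\<lambda>x y. ptBB (choi N) x y + ptBB P x y)
      = (\<lambda>x y. complex_of_real (2 * c1) * ptBB (choi M1) x y)"
    and diff_eq: "(\<lambda>x y. ptBB P x y - ptBB (choi N) x y)
      = (\<lambda>x y. complex_of_real (2 * c2) * ptBB (choi M2) x y)"
    by (auto simp: fun_eq_iff algebra_simps)
  have "psd P"
    unfolding P_def using assms(1,2) J1 J2 by (simp add: psd_add psd_scale_nonneg)
  then show "LN_max_feasible N P"
    unfolding LN_max_feasible_def sum_eq diff_eq using assms(1,2) J1(2) J2(2)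
    by (intro conjI psd_scale_nonneg) simp_all
  have "trA'B' P x y = complex_of_real c1 * trA'B' (choi M1) x y
                     + complex_of_real c2 * trA'B' (choi M2) x y" for x y
    unfolding trA'B'_def P_def by (simp add: sum.distrib sum_distrib_left)
  then show "trA'B' P = (\<lambda>x y. if x = y then complex_of_real (c1 + c2) else 0)"
    using trA'B'_choi[OF J1(3)] trA'B'_choi[OF J2(3)] by (auto simp: fun_eq_iff)
qed

theorem lemma1:
  fixes N :: "('a::finite \<times> 'b::finite) op \<Rightarrow> ('c::finite \<times> 'd::finite) op"
  assumes "bichannel N"
  shows "gamma_PPT N \<ge> ereal (2 powr LN_max N - 1)"
  unfolding gamma_PPT_def
proof (rule Inf_greatest, elim CollectE exE conjE)
  fix e c1 c2 M1 M2
  assume "e = ereal (c1 + c2)"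
    and decomposition: "c1 \<ge> 0" "c2 \<ge> 0" "ppt_channel M1" "ppt_channel M2"
      "N = (\<lambda>X k l. complex_of_real c1 * M1 X k l - complex_of_real c2 * M2 X k l)"
  define P where "P = (\<lambda>x y. complex_of_real c1 * choi M1 x y + complex_of_real c2 * choi M2 x y)"
  note P = LN_max_feasible_of_ppt_decomposition[OF decomposition, folded P_def]
  have "2 powr LN_max N \<le> LN_max_objective P"
    using assms P(1) by (intro powr_LN_max_le_objective) (auto simp: bichannel_def)
  also have "\<dots> \<le> c1 + c2"
    using opnorm_scalar_le[of "complex_of_real (c1 + c2)", unfolded norm_of_real] decomposition(1,2)
    by (simp add: LN_max_objective_def P(2) ptB_scalar)
  finally show "ereal (2 powr LN_max N - 1) \<le> e" using \<open>e = ereal (c1 + c2)\<close> by simp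
qed

end
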